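(* Let $\mathcal A\subseteq E^\infty$, let $V,W\subseteq E$ be block subspaces with $W\subseteq^*V$, let $\vec v$ be a finite block sequence and let $T$ be a $(V,\vec v)$-rule. If player I has a strategy in $B^T_V(\vec v)$ to play in $\mathcal A$, then player I has a strategy in $B^T_W(\vec v)$ to play in $\mathcal A$.
   Context: Fix a countable field $\mathfrak F$ and let $E$ be the countable-dimensional $\mathfrak F$-vector space with basis $(e_n)$. For non-zero $x=\sum a_ne_n$, ${\rm supp}\,x=\{n:a_n\neq0\}$. A block sequence is a sequence of non-zero vectors with $\max{\rm supp}\,x_n<\min{\rm supp}\,x_{n+1}$. "Subspace" means an infinite-dimensional block subspace of $E$. For a subspace $X$, $X[k]=\{x\in X\setminus\{0\}:k<\min{\rm supp}\,x\}$; $W\subseteq^*V$ means $W[n]\subseteq V$ for some $n$. $E^\infty=E^{\mathbb N}$ with the product of discrete topologies; $E^{<\infty}$ is the set of finite block sequences; $\hat{}$ is concatenation; $T_{\vec x}=\{\vec y:\vec x\,\hat{}\,\vec y\in T\}$. Game $B_V(\vec v)$: if $|\vec v|$ is even: II plays a subspace $Z_0\subseteq V$; I plays non-zero $x_0\in Z_0$ and $n_0\in\mathbb N$; II plays non-zero $y_0\in V[n_0]$ and a subspace $Z_1\subseteq V$; I plays $x_1\in Z_1$, $n_1$; II plays $y_1\in V[n_1]$, $Z_2$; etc.; outcome $\vec v\,\hat{}\,(x_0,y_0,x_1,y_1,\dots)$. If $|\vec v|$ is odd: I plays $n_0$; II plays $y_0\in V[n_0]$ and $Z_0\subseteq V$;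 I plays $x_0\in Z_0$ and $n_1$; II plays $y_1\in V[n_1]$ and $Z_1$; etc.; outcome $\vec v\,\hat{}\,(y_0,x_0,y_1,x_1,\dots)$. A $(V,\vec v)$-rule is a set $T\subseteq E^{<\infty}$ with $\vec v\in T$ such that: (i) if $\vec y\in T$, $|\vec y|$ odd, then for every subspace $Z\subseteq V$ there is $z\in Z$ with $\vec y\,\hat{}\,z\in T$; (ii) if $\vec y\in T$, $|\vec y|$ even, then there is $n$ with $\vec y\,\hat{}\,z\in T$ for all $z\in V[n]$. The $T$-induced subgame $B^T_V(\vec v)$ is played as $B_V(\vec v)$ with the additional requirement that every position, i.e. the finite sequence of vectors played so far listed in the order they appear in the outcome, belongs to $T_{\vec v}$ (a player violating this loses). A strategy to play in $\mathcal A$ is one all of whose outcomes lie in $\mathcal A$. *)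

theory Defs
  imports Main "HOL-Library.Countable"
begin

text \<open>Vectors of E are finitely supported functions nat => field; e_n is the indicator of n.\<close>

type_synonym 'f bvec = "nat \<Rightarrow> 'f"

definition Evec :: "('f::field) bvec set" where
  "Evec = {x. finite {n. x n \<noteq> 0}}"

definition supp :: "('f::field) bvec \<Rightarrow> nat set" where
  "supp x = {n. x n \<noteq> 0}"

definition is_block_list :: "('f::field) bvec list \<Rightarrow> bool" where
  "is_block_list xs \<longleftrightarrow>
     (\<forall>x\<in>set xs. x \<in> Evec \<and> x \<noteq> (\<lambda>_. 0)) \<and>
     (\<forall>i. Suc i < length xs \<longrightarrow> Max (supp (xs ! i)) < Min (supp (xs ! Suc i)))"

definition is_block_seq :: "(nat \<Rightarrow> ('f::field) bvec) \<Rightarrow> bool" where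
  "is_block_seq b \<longleftrightarrow>
     (\<forall>i. b i \<in> Evec \<and> b i \<noteq> (\<lambda>_. 0)) \<and>
     (\<forall>i. Max (supp (b i)) < Min (supp (b (Suc i))))"

definition span_seq :: "(nat \<Rightarrow> ('f::field) bvec) \<Rightarrow> 'f bvec set" where
  "span_seq b = {x. \<exists>N c. x = (\<lambda>k. \<Sum>i<N. c i * b i k)}"

definition block_subspace :: "('f::field) bvec set \<Rightarrow> bool" where
  "block_subspace X \<longleftrightarrow> (\<exists>b. is_block_seq b \<and> X = span_seq b)"

definition tail_sub :: "('f::field) bvec set \<Rightarrow> nat \<Rightarrow> 'f bvec set" where
  "tail_sub X k = {x \<in> X. x \<noteq> (\<lambda>_. 0) \<and> k < Min (supp x)}"

definition almost_sub :: "('f::field) bvec set \<Rightarrow> 'f bvec set \<Rightarrow> bool" where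
  "almost_sub W V \<longleftrightarrow> (\<exists>n. tail_sub W n \<subseteq> V)"

definition is_rule :: "('f::field) bvec set \<Rightarrow> 'f bvec list \<Rightarrow> 'f bvec list set \<Rightarrow> bool" where
  "is_rule V v T \<longleftrightarrow>
     T \<subseteq> {xs. is_block_list xs} \<and> v \<in> T \<and>
     (\<forall>y\<in>T. odd (length y) \<longrightarrow>
        (\<forall>Z. block_subspace Z \<and> Z \<subseteq> V \<longrightarrow> (\<exists>z\<in>Z. y @ [z] \<in> T))) \<and>
     (\<forall>y\<in>T. even (length y) \<longrightarrow> (\<exists>n. \<forall>z\<in>tail_sub V n. y @ [z] \<in> T))"

text \<open>Strategies for player I: a map from the moves of II so far (the subspaces Z_j and
  vectors y_j played so far) to I's next move (x, n).\<close>
type_synonym 'f stratI = "'f bvec set list \<Rightarrow> 'f bvec list \<Rightarrow> 'f bvec \<times> nat"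

text \<open>Case |v| even. In round k, II has played Z_0..Z_k and y_0..y_{k-1}; I answers (x_k, n_k).
  Outcome: v @ (x_0, y_0, x_1, y_1, ...).\<close>
definition evI_x :: "'f stratI \<Rightarrow> (nat \<Rightarrow> 'f bvec set) \<Rightarrow> (nat \<Rightarrow> 'f bvec) \<Rightarrow> nat \<Rightarrow> 'f bvec" where
  "evI_x \<sigma> Zs ys k = fst (\<sigma> (map Zs [0..<Suc k]) (map ys [0..<k]))"

definition evI_n :: "'f stratI \<Rightarrow> (nat \<Rightarrow> 'f bvec set) \<Rightarrow> (nat \<Rightarrow> 'f bvec) \<Rightarrow> nat \<Rightarrow> nat" where
  "evI_n \<sigma> Zs ys k = snd (\<sigma> (map Zs [0..<Suc k]) (map ys [0..<k]))"

definition ev_out :: "'f bvec list \<Rightarrow> 'f stratI \<Rightarrow> (nat \<Rightarrow> 'f bvec set) \<Rightarrow> (nat \<Rightarrow> 'f bvec) \<Rightarrow> nat \<Rightarrow> 'f bvec" where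
  "ev_out v \<sigma> Zs ys i =
     (if i < length v then v ! i
      else if even (i - length v) then evI_x \<sigma> Zs ys ((i - length v) div 2)
      else ys ((i - length v) div 2))"

definition I_wins_even ::
  "('f::field) bvec set \<Rightarrow> 'f bvec list \<Rightarrow> 'f bvec list set \<Rightarrow> (nat \<Rightarrow> 'f bvec) set \<Rightarrow> 'f stratI \<Rightarrow> bool" where
  "I_wins_even V v T A \<sigma> \<longleftrightarrow>
     (\<forall>Zs ys.
       (let out = ev_out v \<sigma> Zs ys;
            Zok = (\<lambda>j. block_subspace (Zs j) \<and> Zs j \<subseteq> V);
            yok = (\<lambda>j. ys j \<in> tail_sub V (evI_n \<sigma> Zs ys j) \<and>
                       map out [0..<length v + 2 * j + 2] \<in> T);
            xok = (\<lambda>k. evI_x \<sigma> Zs ys k \<in> Zs k \<and> evI_x \<sigma> Zs ys k \<noteq> (\<lambda>_. 0) \<and>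
                       map out [0..<length v + 2 * k + 1] \<in> T)
        in (\<forall>k. (\<forall>j\<le>k. Zok j) \<and> (\<forall>j<k. yok j) \<longrightarrow> xok k) \<and>
           ((\<forall>j. Zok j \<and> yok j) \<longrightarrow> out \<in> A)))"

text \<open>Case |v| odd. In round k, II has played y_0..y_{k-1} and Z_0..Z_{k-1};
  I answers (x_{k-1}, n_k) (in round 0 only n_0 is used).
  Outcome: v @ (y_0, x_0, y_1, x_1, ...).\<close>
definition odI_x :: "'f stratI \<Rightarrow> (nat \<Rightarrow> 'f bvec set) \<Rightarrow> (nat \<Rightarrow> 'f bvec) \<Rightarrow> nat \<Rightarrow> 'f bvec" where
  "odI_x \<sigma> Zs ys k = fst (\<sigma> (map Zs [0..<Suc k]) (map ys [0..<Suc k]))"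

definition odI_n :: "'f stratI \<Rightarrow> (nat \<Rightarrow> 'f bvec set) \<Rightarrow> (nat \<Rightarrow> 'f bvec) \<Rightarrow> nat \<Rightarrow> nat" where
  "odI_n \<sigma> Zs ys k = snd (\<sigma> (map Zs [0..<k]) (map ys [0..<k]))"

definition od_out :: "'f bvec list \<Rightarrow> 'f stratI \<Rightarrow> (nat \<Rightarrow> 'f bvec set) \<Rightarrow> (nat \<Rightarrow> 'f bvec) \<Rightarrow> nat \<Rightarrow> 'f bvec" where
  "od_out v \<sigma> Zs ys i =
     (if i < length v then v ! i
      else if even (i - length v) then ys ((i - length v) div 2)
      else odI_x \<sigma> Zs ys ((i - length v) div 2))"

definition I_wins_odd ::
  "('f::field) bvec set \<Rightarrow> 'f bvec list \<Rightarrow> 'f bvec list set \<Rightarrow> (nat \<Rightarrow> 'f bvec) set \<Rightarrow> 'f stratI \<Rightarrow> bool" where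
  "I_wins_odd V v T A \<sigma> \<longleftrightarrow>
     (\<forall>Zs ys.
       (let out = od_out v \<sigma> Zs ys;
            IIok = (\<lambda>j. ys j \<in> tail_sub V (odI_n \<sigma> Zs ys j) \<and>
                        block_subspace (Zs j) \<and> Zs j \<subseteq> V \<and>
                        map out [0..<length v + 2 * j + 1] \<in> T);
            xok = (\<lambda>k. odI_x \<sigma> Zs ys k \<in> Zs k \<and> odI_x \<sigma> Zs ys k \<noteq> (\<lambda>_. 0) \<and>
                       map out [0..<length v + 2 * k + 2] \<in> T)
        in (\<forall>k. (\<forall>j\<le>k. IIok j) \<longrightarrow> xok k) \<and>
           ((\<forall>j. IIok j) \<longrightarrow> out \<in> A)))"

definition I_has_strategy ::
  "('f::field) bvec set \<Rightarrow> 'f bvec list \<Rightarrow> 'f bvec list set \<Rightarrow> (nat \<Rightarrow> 'f bvec) set \<Rightarrow> bool" where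
  "I_has_strategy V v T A \<longleftrightarrow>
     (\<exists>\<sigma>. if even (length v) then I_wins_even V v T A \<sigma> else I_wins_odd V v T A \<sigma>)"

end

theory Submission imports Defs begin

(* Fix n0 with W[n0] \<subseteq> V.  Every subspace Z \<subseteq> W contains a subspace
   Z' \<subseteq> Z \<inter> V: drop the first n0+1 vectors of a block basis of Z, so that every non-zero
   vector of the span starts after n0 and therefore lies in W[n0] \<subseteq> V.  Choose such a
   refinement f Z for each Z.  Player I transfers a strategy \<sigma> for B^T_V(v) to B^T_W(v):
   whenever II plays Z in the W-game, I pretends II played f Z in the V-game, and every
   integer n demanded by \<sigma> is raised to n + n0.  Then every legal run of II in the W-game
   yields a legal run of II in the V-game with the same vectors (II's vectors in W[n + n0] lie
   in V[n], and f Z \<subseteq> Z), so \<sigma>'s answers are legal and the outcome is \<sigma>'s outcome, in A. *)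

lemma block_seq_Min_supp_ge:
  assumes "is_block_seq (b :: nat \<Rightarrow> ('f::field) bvec)"
  shows "i \<le> Min (supp (b i))"
proof (induction i)
  case 0
  then show ?case by simp
next
  case (Suc i)
  have "finite (supp (b i))" and "supp (b i) \<noteq> {}"
    using assms unfolding is_block_seq_def Evec_def supp_def by (auto simp: fun_eq_iff)
  then have "Min (supp (b i)) \<le> Max (supp (b i))" by (meson Max_ge Min_in)
  moreover have "Max (supp (b i)) < Min (supp (b (Suc i)))"
    using assms unfolding is_block_seq_def by blast
  ultimately show ?case using Suc by linarith
qed

lemma block_seq_vanishes_below:
  assumes "is_block_seq (b :: nat \<Rightarrow> ('f::field) bvec)" and "k < j"
  shows "b j k = 0"
proof (rule ccontr)
  assume "b j k \<noteq> 0"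
  then have "k \<in> supp (b j)" by (simp add: supp_def)
  moreover have "finite (supp (b j))"
    using assms unfolding is_block_seq_def Evec_def supp_def by auto
  ultimately have "Min (supp (b j)) \<le> k" by simp
  with block_seq_Min_supp_ge[OF assms(1), of j] assms(2) show False by linarith
qed

lemma span_seq_shift_subset:
  "span_seq (\<lambda>i. b (i + K)) \<subseteq> span_seq (b :: nat \<Rightarrow> ('f::field) bvec)"
proof
  fix x assume "x \<in> span_seq (\<lambda>i. b (i + K))"
  then obtain N c where x: "x = (\<lambda>k. \<Sum>i<N. c i * b (i + K) k)"
    unfolding span_seq_def by blast
  define c' where "c' i = (if K \<le> i then c (i - K) else 0)" for i
  have "(\<Sum>i<N + K. c' i * b i k) = (\<Sum>i<N. c i * b (i + K) k)" for k
    by (induction N) (auto simp: c'_def add.commute)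
  then show "x \<in> span_seq b"
    unfolding span_seq_def x by (intro CollectI exI[of _ "N + K"] exI[of _ c']) auto
qed

lemma span_seq_Evec:
  assumes "\<And>i. b i \<in> Evec" and "x \<in> span_seq (b :: nat \<Rightarrow> ('f::field) bvec)"
  shows "x \<in> Evec"
proof -
  obtain N c where x: "x = (\<lambda>k. \<Sum>i<N. c i * b i k)"
    using assms(2) unfolding span_seq_def by blast
  have "{k. x k \<noteq> 0} \<subseteq> (\<Union>i<N. {k. b i k \<noteq> 0})"
  proof
    fix k assume "k \<in> {k. x k \<noteq> 0}"
    then obtain i where "i < N" "c i * b i k \<noteq> 0"
      unfolding x by (metis (mono_tags, lifting) lessThan_iff mem_Collect_eq sum.neutral)
    then show "k \<in> (\<Union>i<N. {k. b i k \<noteq> 0})" by auto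
  qed
  moreover have "finite (\<Union>i<N. {k. b i k \<noteq> 0})"
    using assms(1) unfolding Evec_def by auto
  ultimately show ?thesis unfolding Evec_def by (auto intro: finite_subset)
qed

lemma zero_in_block_subspace:
  assumes "block_subspace (V :: ('f::field) bvec set)"
  shows "(\<lambda>_. 0) \<in> V"
  using assms unfolding block_subspace_def span_seq_def by (auto intro!: exI[of _ 0])

lemma block_subspace_tail_refinement:
  assumes "block_subspace (Z :: ('f::field) bvec set)"
  shows "\<exists>Z'. block_subspace Z' \<and> Z' \<subseteq> Z \<and> Z' - {\<lambda>_. 0} \<subseteq> tail_sub Z n"
proof -
  obtain b where b: "is_block_seq b" "Z = span_seq b"
    using assms unfolding block_subspace_def by blast
  define b' where "b' i = b (i + Suc n)" for i
  have b': "is_block_seq b'" using b(1) unfolding is_block_seq_def b'_def by auto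
  have sub: "span_seq b' \<subseteq> Z" using span_seq_shift_subset b(2) unfolding b'_def by blast
  have "x \<in> tail_sub Z n" if x: "x \<in> span_seq b'" "x \<noteq> (\<lambda>_. 0)" for x
  proof -
    obtain N c where xc: "x = (\<lambda>k. \<Sum>i<N. c i * b' i k)" using x(1) unfolding span_seq_def by blast
    have vanish: "x k = 0" if "k \<le> n" for k
      using block_seq_vanishes_below[OF b(1), of k] that unfolding xc b'_def by simp
    have "finite (supp x)"
      using span_seq_Evec[OF _ x(1)] b' unfolding is_block_seq_def Evec_def supp_def by blast
    moreover have "supp x \<noteq> {}" using x(2) unfolding supp_def by auto
    ultimately have "Min (supp x) \<in> supp x" by (rule Min_in)
    then have "n < Min (supp x)" using vanish unfolding supp_def by (meson mem_Collect_eq not_le)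
    then show ?thesis using x sub unfolding tail_sub_def by auto
  qed
  then show ?thesis using b' sub unfolding block_subspace_def by blast
qed

lemma block_subspace_refine_into:
  assumes "block_subspace (Z :: ('f::field) bvec set)" and "Z \<subseteq> W"
    and "tail_sub W n0 \<subseteq> V" and "(\<lambda>_. 0) \<in> V"
  shows "\<exists>Z'. block_subspace Z' \<and> Z' \<subseteq> Z \<and> Z' \<subseteq> V"
proof -
  obtain Z' where Z': "block_subspace Z'" "Z' \<subseteq> Z" "Z' - {\<lambda>_. 0} \<subseteq> tail_sub Z n0"
    using block_subspace_tail_refinement[OF assms(1)] by blast
  have "tail_sub Z n0 \<subseteq> tail_sub W n0" using assms(2) unfolding tail_sub_def by auto
  with Z' assms(3,4) show ?thesis by blast
qed

text \<open>A move of II legal against demand n + n0 in W is legal against demand n in V.\<close>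
lemma tail_sub_shift:
  assumes "tail_sub W n0 \<subseteq> V" and "y \<in> tail_sub W (n + n0)"
  shows "y \<in> tail_sub V n"
  using assms unfolding tail_sub_def by auto

definition transfer_strategy ::
  "('f bvec set \<Rightarrow> 'f bvec set) \<Rightarrow> nat \<Rightarrow> 'f stratI \<Rightarrow> 'f stratI" where
  "transfer_strategy f n0 \<sigma> Zl yl = (fst (\<sigma> (map f Zl) yl), snd (\<sigma> (map f Zl) yl) + n0)"

definition refines_into ::
  "('f::field) bvec set \<Rightarrow> 'f bvec set \<Rightarrow> ('f bvec set \<Rightarrow> 'f bvec set) \<Rightarrow> bool" where
  "refines_into W V f \<longleftrightarrow>
     (\<forall>Z. block_subspace Z \<and> Z \<subseteq> W \<longrightarrow> block_subspace (f Z) \<and> f Z \<subseteq> Z \<and> f Z \<subseteq> V)"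

lemma transfer_strategy_even_moves:
  "evI_x (transfer_strategy f n0 \<sigma>) Zs ys k = evI_x \<sigma> (f \<circ> Zs) ys k"
  "evI_n (transfer_strategy f n0 \<sigma>) Zs ys k = evI_n \<sigma> (f \<circ> Zs) ys k + n0"
  "ev_out v (transfer_strategy f n0 \<sigma>) Zs ys = ev_out v \<sigma> (f \<circ> Zs) ys"
  by (simp_all add: evI_x_def evI_n_def transfer_strategy_def ev_out_def fun_eq_iff)

lemma transfer_strategy_odd_moves:
  "odI_x (transfer_strategy f n0 \<sigma>) Zs ys k = odI_x \<sigma> (f \<circ> Zs) ys k"
  "odI_n (transfer_strategy f n0 \<sigma>) Zs ys k = odI_n \<sigma> (f \<circ> Zs) ys k + n0"
  "od_out v (transfer_strategy f n0 \<sigma>) Zs ys = od_out v \<sigma> (f \<circ> Zs) ys"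
  by (simp_all add: odI_x_def odI_n_def transfer_strategy_def od_out_def fun_eq_iff)

lemma transfer_strategy_even:
  assumes f: "refines_into W V f" and n0: "tail_sub W n0 \<subseteq> V"
    and win: "I_wins_even V v T A \<sigma>"
  shows "I_wins_even W v T A (transfer_strategy f n0 \<sigma>)"
  unfolding I_wins_even_def Let_def transfer_strategy_even_moves
proof (intro allI conjI impI)
  fix Zs :: "nat \<Rightarrow> _ bvec set" and ys :: "nat \<Rightarrow> _ bvec"
  let ?out = "ev_out v \<sigma> (f \<circ> Zs) ys"
  have Zok: "block_subspace ((f \<circ> Zs) j) \<and> (f \<circ> Zs) j \<subseteq> V"
    and Zsub: "(f \<circ> Zs) j \<subseteq> Zs j" if "block_subspace (Zs j) \<and> Zs j \<subseteq> W" for j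
    using f that unfolding refines_into_def by auto
  note yok = tail_sub_shift[OF n0]
  from win have
    legal: "\<And>k. (\<forall>j\<le>k. block_subspace ((f \<circ> Zs) j) \<and> (f \<circ> Zs) j \<subseteq> V) \<and>
       (\<forall>j<k. ys j \<in> tail_sub V (evI_n \<sigma> (f \<circ> Zs) ys j) \<and>
          map ?out [0..<length v + 2 * j + 2] \<in> T) \<Longrightarrow>
       evI_x \<sigma> (f \<circ> Zs) ys k \<in> (f \<circ> Zs) k \<and> evI_x \<sigma> (f \<circ> Zs) ys k \<noteq> (\<lambda>_. 0) \<and>
       map ?out [0..<length v + 2 * k + 1] \<in> T"
    and wins: "(\<forall>j. (block_subspace ((f \<circ> Zs) j) \<and> (f \<circ> Zs) j \<subseteq> V) \<and>
       (ys j \<in> tail_sub V (evI_n \<sigma> (f \<circ> Zs) ys j) \<and>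
          map ?out [0..<length v + 2 * j + 2] \<in> T)) \<Longrightarrow> ?out \<in> A"
    unfolding I_wins_even_def Let_def by blast+
  {
    fix k
    assume II: "(\<forall>j\<le>k. block_subspace (Zs j) \<and> Zs j \<subseteq> W) \<and>
      (\<forall>j<k. ys j \<in> tail_sub W (evI_n \<sigma> (f \<circ> Zs) ys j + n0) \<and>
         map ?out [0..<length v + 2 * j + 2] \<in> T)"
    then have "evI_x \<sigma> (f \<circ> Zs) ys k \<in> (f \<circ> Zs) k \<and> evI_x \<sigma> (f \<circ> Zs) ys k \<noteq> (\<lambda>_. 0) \<and>
       map ?out [0..<length v + 2 * k + 1] \<in> T"
      using Zok yok by (intro legal) blast
    moreover have "(f \<circ> Zs) k \<subseteq> Zs k" using II Zsub by blast
    ultimately show "evI_x \<sigma> (f \<circ> Zs) ys k \<in> Zs k" "evI_x \<sigma> (f \<circ> Zs) ys k \<noteq> (\<lambda>_. 0)"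
      "map ?out [0..<length v + 2 * k + 1] \<in> T" by auto
  next
    assume "\<forall>j. (block_subspace (Zs j) \<and> Zs j \<subseteq> W) \<and>
      (ys j \<in> tail_sub W (evI_n \<sigma> (f \<circ> Zs) ys j + n0) \<and>
         map ?out [0..<length v + 2 * j + 2] \<in> T)"
    then show "?out \<in> A" using Zok yok by (intro wins) blast
  }
qed

lemma transfer_strategy_odd:
  assumes f: "refines_into W V f" and n0: "tail_sub W n0 \<subseteq> V"
    and win: "I_wins_odd V v T A \<sigma>"
  shows "I_wins_odd W v T A (transfer_strategy f n0 \<sigma>)"
  unfolding I_wins_odd_def Let_def transfer_strategy_odd_moves
proof (intro allI conjI impI)
  fix Zs :: "nat \<Rightarrow> _ bvec set" and ys :: "nat \<Rightarrow> _ bvec"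
  let ?out = "od_out v \<sigma> (f \<circ> Zs) ys"
  have Zok: "block_subspace ((f \<circ> Zs) j) \<and> (f \<circ> Zs) j \<subseteq> V"
    and Zsub: "(f \<circ> Zs) j \<subseteq> Zs j" if "block_subspace (Zs j) \<and> Zs j \<subseteq> W" for j
    using f that unfolding refines_into_def by auto
  note yok = tail_sub_shift[OF n0]
  from win have
    legal: "\<And>k. (\<forall>j\<le>k. ys j \<in> tail_sub V (odI_n \<sigma> (f \<circ> Zs) ys j) \<and>
         block_subspace ((f \<circ> Zs) j) \<and> (f \<circ> Zs) j \<subseteq> V \<and>
         map ?out [0..<length v + 2 * j + 1] \<in> T) \<Longrightarrow>
       odI_x \<sigma> (f \<circ> Zs) ys k \<in> (f \<circ> Zs) k \<and> odI_x \<sigma> (f \<circ> Zs) ys k \<noteq> (\<lambda>_. 0) \<and>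
       map ?out [0..<length v + 2 * k + 2] \<in> T"
    and wins: "(\<forall>j. ys j \<in> tail_sub V (odI_n \<sigma> (f \<circ> Zs) ys j) \<and>
         block_subspace ((f \<circ> Zs) j) \<and> (f \<circ> Zs) j \<subseteq> V \<and>
         map ?out [0..<length v + 2 * j + 1] \<in> T) \<Longrightarrow> ?out \<in> A"
    unfolding I_wins_odd_def Let_def by blast+
  {
    fix k
    assume II: "\<forall>j\<le>k. ys j \<in> tail_sub W (odI_n \<sigma> (f \<circ> Zs) ys j + n0) \<and>
      block_subspace (Zs j) \<and> Zs j \<subseteq> W \<and> map ?out [0..<length v + 2 * j + 1] \<in> T"
    then have "odI_x \<sigma> (f \<circ> Zs) ys k \<in> (f \<circ> Zs) k \<and> odI_x \<sigma> (f \<circ> Zs) ys k \<noteq> (\<lambda>_. 0) \<and>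
       map ?out [0..<length v + 2 * k + 2] \<in> T"
      using Zok yok by (intro legal) blast
    moreover have "(f \<circ> Zs) k \<subseteq> Zs k" using II Zsub by blast
    ultimately show "odI_x \<sigma> (f \<circ> Zs) ys k \<in> Zs k" "odI_x \<sigma> (f \<circ> Zs) ys k \<noteq> (\<lambda>_. 0)"
      "map ?out [0..<length v + 2 * k + 2] \<in> T" by auto
  next
    assume "\<forall>j. ys j \<in> tail_sub W (odI_n \<sigma> (f \<circ> Zs) ys j + n0) \<and>
      block_subspace (Zs j) \<and> Zs j \<subseteq> W \<and> map ?out [0..<length v + 2 * j + 1] \<in> T"
    then show "?out \<in> A" using Zok yok by (intro wins) blast
  }
qed

theorem mainTheorem4:
  fixes A :: "(nat \<Rightarrow> ('f::{field,countable}) bvec) set"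
    and V W :: "'f bvec set" and v :: "'f bvec list" and T :: "'f bvec list set"
  assumes "A \<subseteq> {s. \<forall>i. s i \<in> Evec}"
    and "block_subspace V" and "block_subspace W" and "almost_sub W V"
    and "is_block_list v"
    and "is_rule V v T"
    and "I_has_strategy V v T A"
  shows "I_has_strategy W v T A"
proof -
  obtain \<sigma> where \<sigma>: "if even (length v) then I_wins_even V v T A \<sigma> else I_wins_odd V v T A \<sigma>"
    using assms(7) unfolding I_has_strategy_def by blast
  obtain n0 where n0: "tail_sub W n0 \<subseteq> V" using assms(4) unfolding almost_sub_def by blast
  define f where "f Z = (SOME Z'. block_subspace Z' \<and> Z' \<subseteq> Z \<and> Z' \<subseteq> V)" for Z :: "'f bvec set"
  have "refines_into W V f"
    unfolding refines_into_def f_def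
    using someI_ex[OF block_subspace_refine_into[OF _ _ n0 zero_in_block_subspace[OF assms(2)]]]
    by blast
  with n0 \<sigma> have "if even (length v) then I_wins_even W v T A (transfer_strategy f n0 \<sigma>)
                   else I_wins_odd W v T A (transfer_strategy f n0 \<sigma>)"
    by (simp split: if_splits add: transfer_strategy_even transfer_strategy_odd)
  then show ?thesis unfolding I_has_strategy_def by blast
qed

end
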